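(* Let $w,w'\in S_n$ be such that $w$ covers $w'$ in the Bruhat order, with $w=w'\cdot(i,j)$ for positions $i<j$. Let $\alpha=\mathsf{code}(w)$ and $\alpha'=\mathsf{code}(w')$. Let $\underline{w}^{(I)}$ be the reduced word of $w'$ obtained by deleting the $I$-th letter of the row-reading word $\underline{w}$ of $w$, and let $\underline{w'}$ be the row-reading word of $w'$. Then there exists a sequence $f_1f_2\cdots f_p$ of moves, each a commutation or a braid move, transforming $\underline{w}^{(I)}$ into $\underline{w'}$, such that $$\#\{k: f_k \text{ is a braid move}\}=(\alpha_i-\alpha_i'-1)(j-i-1+\alpha_j-\alpha_i'),$$ $$\#\{k: f_k \text{ is a commutation}\}=(\alpha_i-\alpha_i'-1)\Big(\Big(\sum_{k=i}^{j-1}\alpha_k'\Big)-2(j-i-1+\alpha_j-\alpha_i')\Big).$$ Moreover, for any other sequence $g_1g_2\cdots g_q$ of commutations and braid moves transforming $\underline{w}^{(I)}$ into $\underline{w'}$, the number of braid moves among the $g_k$ has the same parity as the number of braid moves among the $f_k$, and likewise for the numbers of commutations.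
   Context: $S_n$ is generated by the simple reflections $s_m=(m,m+1)$, $m\in[n-1]$; permutations are written in one-line notation and $w\cdot(i,j)$ swaps the entries in positions $i$ and $j$. $\ell(w)$ is the number of inversions. The code of $w$ is $\alpha=(\alpha_1,\dots,\alpha_{n-1})$ with $\alpha_m=\#\{k>m: w(k)<w(m)\}$ (set $\alpha_n=0$). The row-reading word of $w$ is $\underline{w}=\underline{w}_1\underline{w}_2\cdots\underline{w}_{n-1}$, where $\underline{w}_m=s_{\alpha_m+m-1}s_{\alpha_m+m-2}\cdots s_{m+1}s_m$ if $\alpha_m>0$ and $\underline{w}_m$ is empty otherwise; it is a reduced word for $w$. $w$ covers $w'$ means $w'<w$ in the Bruhat order with $\ell(w')=\ell(w)-1$; equivalently $w=w'\cdot(i,j)$ with $i<j$, $w'(i)<w'(j)$ and no $k$ with $i<k<j$ and $w'(i)<w'(k)<w'(j)$. In this situation, writing $\underline{w}=s_{r_1}\cdots s_{r_\ell}$, there is a unique index $I$ such that $s_{r_1}\cdots\widehat{s_{r_I}}\cdots s_{r_\ell}$ is a reduced word for $w'$; this word is denoted $\underline{w}^{(I)}$. A commutation replaces two adjacent letters $s_as_b$ with $|a-b|\ge2$ by $s_bs_a$; a braid move replaces three adjacent letters $s_as_{a+1}s_a$ by $s_{a+1}s_as_{a+1}$ or vice versa. *)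

theory Defs
  imports "HOL-Combinatorics.Permutations"
begin

text \<open>Permutations of S_n are functions nat => nat permuting {1..n}
  (one-line notation: w(1), ..., w(n)). Words in simple reflections are lists of
  indices r, where the letter r stands for s_r = (r, r+1).\<close>

definition code :: "nat \<Rightarrow> (nat \<Rightarrow> nat) \<Rightarrow> nat \<Rightarrow> nat" where
  "code n w m = card {k. m < k \<and> k \<le> n \<and> w k < w m}"

definition inv_length :: "nat \<Rightarrow> (nat \<Rightarrow> nat) \<Rightarrow> nat" where
  "inv_length n w = card {(a, b). 1 \<le> a \<and> a < b \<and> b \<le> n \<and> w b < w a}"

text \<open>The permutation s_{r1} ... s_{rl}, composing as functions, so that
  w * (i,j) = w o transpose i j swaps the entries in positions i and j.\<close>
fun word_perm :: "nat list \<Rightarrow> nat \<Rightarrow> nat" where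
  "word_perm [] = id"
| "word_perm (r # rs) = Transposition.transpose r (Suc r) \<circ> word_perm rs"

definition reduced_word_of :: "nat \<Rightarrow> nat list \<Rightarrow> (nat \<Rightarrow> nat) \<Rightarrow> bool" where
  "reduced_word_of n ws w \<longleftrightarrow> (\<forall>r \<in> set ws. 1 \<le> r \<and> r < n) \<and>
      word_perm ws = w \<and> length ws = inv_length n w"

definition row_word :: "nat \<Rightarrow> (nat \<Rightarrow> nat) \<Rightarrow> nat list" where
  "row_word n w = concat (map (\<lambda>m. rev [m..<code n w m + m]) [1..<n])"

text \<open>Delete the I-th letter (1-indexed).\<close>
definition delete_letter :: "nat list \<Rightarrow> nat \<Rightarrow> nat list" where
  "delete_letter ws I = take (I - 1) ws @ drop I ws"

text \<open>w covers w' in Bruhat order, with w = w' * (i,j), i < j.\<close>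
definition covers_by :: "nat \<Rightarrow> (nat \<Rightarrow> nat) \<Rightarrow> (nat \<Rightarrow> nat) \<Rightarrow> nat \<Rightarrow> nat \<Rightarrow> bool" where
  "covers_by n w w' i j \<longleftrightarrow> w' permutes {1..n} \<and> 1 \<le> i \<and> i < j \<and> j \<le> n \<and>
     w = w' \<circ> Transposition.transpose i j \<and> w' i < w' j \<and>
     \<not> (\<exists>k. i < k \<and> k < j \<and> w' i < w' k \<and> w' k < w' j)"

datatype move_kind = Comm | Braid

inductive move :: "nat list \<Rightarrow> move_kind \<Rightarrow> nat list \<Rightarrow> bool" where
  commute: "a + 2 \<le> b \<or> b + 2 \<le> a \<Longrightarrow> move (xs @ [a, b] @ ys) Comm (xs @ [b, a] @ ys)"
| braid1: "move (xs @ [a, Suc a, a] @ ys) Braid (xs @ [Suc a, a, Suc a] @ ys)"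
| braid2: "move (xs @ [Suc a, a, Suc a] @ ys) Braid (xs @ [a, Suc a, a] @ ys)"

inductive move_seq :: "nat list \<Rightarrow> move_kind list \<Rightarrow> nat list \<Rightarrow> bool" where
  nil: "move_seq u [] u"
| cons: "move u f v \<Longrightarrow> move_seq v fs x \<Longrightarrow> move_seq u (f # fs) x"

end

theory Submission
  imports Defs "HOL-Library.Product_Lexorder"
begin

text \<open>Write \<open>\<alpha>\<close>, \<open>\<alpha>'\<close> for the codes of \<open>w\<close>, \<open>w'\<close>. The blocks \<open>m+1, \<dots>, n-1\<close> of the
  row-reading word of \<open>w\<close> spell the standardisation of \<open>w(m+1) \<cdots> w(n)\<close>. Hence deleting a
  letter of block \<open>m\<close> multiplies \<open>w\<close> on the right by a transposition \<open>(m, q)\<close>; since the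
  result is \<open>w' = w (i, j)\<close>, the letter lies in block \<open>i\<close>. The shortened word then differs
  from the row-reading word of \<open>w'\<close> only in that the \<open>c = \<alpha>\<^sub>i - \<alpha>'\<^sub>i - 1\<close> letters
  \<open>s\<^sub>y, \<dots>, s\<^bsub>y+c-1\<^esub>\<close> with \<open>y = i + \<alpha>'\<^sub>i + 1\<close> stand in front of the blocks
  \<open>i, \<dots>, j-1\<close> of \<open>w'\<close>, whereas \<open>w'\<close> has \<open>s\<^bsub>j+\<alpha>\<^sub>j\<^esub>, \<dots>, s\<^bsub>j+\<alpha>\<^sub>j+c-1\<^esub>\<close> at the start
  of its block \<open>j\<close>. Such a letter crosses block \<open>i\<close> of \<open>w'\<close> by commutations, and block
  \<open>m\<close>, \<open>i < m < j\<close>, by commutations if \<open>w'(m) < w'(i)\<close> and with exactly one braid move,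
  after which the letter has become one larger, if \<open>w'(m) > w'(j)\<close>; counting gives the two
  formulas.

  The parities are invariants. In the reflection sequence of a word a commutation swaps two
  adjacent disjoint transpositions and a braid move reverses three pairwise overlapping ones, so
  every move changes the number of lexicographic inversions of the sequence by an odd number,
  while only commutations change the parity of the number of inversions between disjoint
  transpositions.\<close>

section \<open>Row-reading words\<close>

lemma word_perm_append: "word_perm (xs @ ys) = word_perm xs \<circ> word_perm ys"
  by (induction xs) (auto simp: comp_assoc)

lemma bij_word_perm: "bij (word_perm xs)"
  by (induction xs) (simp_all only: word_perm.simps bij_id bij_comp bij_transpose)

lemma upt_append: "i \<le> j \<Longrightarrow> j \<le> k \<Longrightarrow> [i..<j] @ [j..<k] = [i..<k]"
  using upt_add_eq_append[of i j "k - j"] by simp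

definition shift_cycle :: "nat \<Rightarrow> nat \<Rightarrow> nat \<Rightarrow> nat" where
  "shift_cycle m a x = (if x = m then m + a else if m < x \<and> x \<le> m + a then x - 1 else x)"

lemma word_perm_rev_upt: "word_perm (rev [m..<m + a]) = shift_cycle m a"
  by (induction a) (auto simp: shift_cycle_def fun_eq_iff transpose_def)

definition row_block :: "nat \<Rightarrow> (nat \<Rightarrow> nat) \<Rightarrow> nat \<Rightarrow> nat list" where
  "row_block n w m = rev [m..<m + code n w m]"

lemma row_word_eq_concat_blocks: "row_word n w = concat (map (row_block n w) [1..<n])"
  unfolding row_word_def row_block_def
  by (intro arg_cong[where f = concat] map_cong) (simp_all add: add.commute)

lemma word_perm_row_block: "word_perm (row_block n w m) = shift_cycle m (code n w m)"
  by (simp add: row_block_def word_perm_rev_upt)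

lemma code_le: "code n w m \<le> n - m"
proof -
  have "code n w m \<le> card {m<..n}"
    unfolding code_def by (rule card_mono) auto
  then show ?thesis by simp
qed

text \<open>The standardisation of the tail \<open>w(m+1) \<dots> w(n)\<close>: the permutation of \<open>{m+1..n}\<close>
  whose values are ordered like those of \<open>w\<close>, extended by the identity.\<close>
definition tail_std :: "nat \<Rightarrow> (nat \<Rightarrow> nat) \<Rightarrow> nat \<Rightarrow> nat \<Rightarrow> nat" where
  "tail_std n w m q =
     (if m < q \<and> q \<le> n then m + 1 + card {q'. m < q' \<and> q' \<le> n \<and> w q' < w q} else q)"

lemma finite_bounded_nat [simp]:
  "finite {q. a \<le> q \<and> q \<le> (n::nat) \<and> P q}" "finite {q. a < q \<and> q \<le> (n::nat) \<and> P q}"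
  by (rule finite_subset[of _ "{..n}"], auto)+

lemma tail_std_Suc:
  assumes inj: "inj_on w {1..n}" and m: "Suc m < n"
  shows "tail_std n w m = shift_cycle (Suc m) (code n w (Suc m)) \<circ> tail_std n w (Suc m)"
proof
  fix q
  let ?a = "code n w (Suc m)"
  let ?below = "\<lambda>m' v. {q'. m' < q' \<and> q' \<le> n \<and> w q' < v}"
  have a: "Suc m + ?a \<le> n" using code_le[of n w "Suc m"] m by simp
  consider "q = Suc m" | "Suc m < q" "q \<le> n" | "q \<le> m \<or> n < q" by linarith
  then show "tail_std n w m q = (shift_cycle (Suc m) ?a \<circ> tail_std n w (Suc m)) q"
  proof cases
    case 1
    have "?below m (w q) = ?below (Suc m) (w q)"
      using 1 by auto (metis Suc_lessI order.irrefl)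
    then show ?thesis using 1 m by (simp add: tail_std_def shift_cycle_def code_def)
  next
    case 2
    have "w q \<noteq> w (Suc m)"
      using inj 2 inj_onD[of w "{1..n}" q "Suc m"] by fastforce
    then consider "w (Suc m) < w q" | "w q < w (Suc m)" by linarith
    then show ?thesis
    proof cases
      case 1
      have "?below m (w q) = insert (Suc m) (?below (Suc m) (w q))"
        using 1 m by auto
      moreover have "?below (Suc m) (w (Suc m)) \<subseteq> ?below (Suc m) (w q)" using 1 by auto
      then have "?a \<le> card (?below (Suc m) (w q))" unfolding code_def by (simp add: card_mono)
      ultimately show ?thesis using 2 by (simp add: tail_std_def shift_cycle_def)
    next
      case 2
      have "?below m (w q) = ?below (Suc m) (w q)"
        using 2 by auto (metis Suc_lessI less_asym)
      moreover have "?below (Suc m) (w q) \<subset> ?below (Suc m) (w (Suc m))"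
        using 2 \<open>Suc m < q\<close> \<open>q \<le> n\<close> by auto
      then have "card (?below (Suc m) (w q)) < ?a"
        unfolding code_def by (simp add: psubset_card_mono)
      ultimately show ?thesis
        using \<open>Suc m < q\<close> \<open>q \<le> n\<close> by (simp add: tail_std_def shift_cycle_def)
    qed
  next
    case 3
    then show ?thesis using a by (auto simp: tail_std_def shift_cycle_def)
  qed
qed

lemma word_perm_row_blocks_from:
  assumes inj: "inj_on w {1..n}" and "m < n"
  shows "word_perm (concat (map (row_block n w) [Suc m..<n])) = tail_std n w m"
proof -
  have "m \<le> n - 1" using \<open>m < n\<close> by simp
  then show ?thesis
  proof (induction m rule: inc_induct)
    case base
    have top: "x = n" if "n - Suc 0 < x" "x \<le> n" for x using that by linarith
    then have "{q'. n - Suc 0 < q' \<and> q' \<le> n \<and> w q' < w n} = {}" by auto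
    then have "tail_std n w (n - 1) x = x" for x
      using top by (cases "x = n") (auto simp: tail_std_def)
    then have "tail_std n w (n - 1) = id" by auto
    then show ?case using \<open>m < n\<close> by simp
  next
    case (step k)
    then have "[Suc k..<n] = Suc k # [Suc (Suc k)..<n]" by (simp add: upt_conv_Cons)
    then show ?case
      using step tail_std_Suc[OF inj, of k] by (simp add: word_perm_append word_perm_row_block)
  qed
qed

lemma bij_tail_std: "inj_on w {1..n} \<Longrightarrow> m < n \<Longrightarrow> bij (tail_std n w m)"
  by (metis word_perm_row_blocks_from bij_word_perm)

lemma tail_std_0:
  assumes w: "w permutes {1..n}"
  shows "tail_std n w 0 = w"
proof
  fix q
  show "tail_std n w 0 q = w q"
  proof (cases "q \<in> {1..n}")
    case True
    let ?S = "{q'. 0 < q' \<and> q' \<le> n \<and> w q' < w q}"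
    have wq: "w q \<in> {1..n}" using True permutes_in_image[OF w] by blast
    have "w ` ?S = {v \<in> w ` {1..n}. v < w q}" by auto
    also have "\<dots> = {1..<w q}" unfolding permutes_image[OF w] using wq by auto
    finally have "card ?S = w q - 1"
      using card_image[OF permutes_inj_on[OF w]] by (metis card_atLeastLessThan)
    then show ?thesis using True wq by (simp add: tail_std_def)
  next
    case False
    then show ?thesis using permutes_not_in[OF w] by (auto simp: tail_std_def)
  qed
qed

lemma word_perm_row_word:
  assumes w: "w permutes {1..n}"
  shows "word_perm (row_word n w) = w"
proof (cases "n = 0")
  case True
  then show ?thesis using w by (simp add: row_word_def)
next
  case False
  then show ?thesis
    using word_perm_row_blocks_from[OF permutes_inj_on[OF w], of 0] tail_std_0[OF w]
    by (simp add: row_word_eq_concat_blocks)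
qed

section \<open>Deleting a letter from the row-reading word\<close>

lemma transpose_comp_bij:
  assumes "bij f" "f a = c" "f b = d"
  shows "transpose c d \<circ> f = f \<circ> transpose a b"
  using assms by (simp add: transpose_comp_eq bij_is_inj inv_f_eq)

lemma transpose_eq_transpose_imp:
  fixes a b c d :: "'a::order"
  assumes "transpose a b = transpose c d" "a < b" "c < d"
  shows "a = c \<and> b = d"
  using fun_cong[OF assms(1), of a] fun_cong[OF assms(1), of c] assms(2,3)
  unfolding transpose_eq_iff by auto

lemma rev_upt_split:
  assumes "m \<le> k" "k < m + a"
  shows "rev [m..<m + a] = rev [Suc k..<m + a] @ k # rev [m..<k]"
proof -
  have "[m..<m + a] = [m..<k] @ k # [Suc k..<m + a]"
    using assms upt_append[of m k "m + a"] by (simp add: upt_conv_Cons)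
  then show ?thesis by simp
qed

lemma word_perm_rev_upt_delete:
  assumes "m \<le> k" "k < m + a"
  shows "word_perm (rev [Suc k..<m + a] @ rev [m..<k]) = shift_cycle m a \<circ> transpose m (Suc k)"
proof -
  let ?A = "word_perm (rev [Suc k..<m + a])" and ?C = "shift_cycle m (k - m)"
  have C: "word_perm (rev [m..<k]) = ?C" using word_perm_rev_upt[of m "k - m"] assms by simp
  have "transpose k (Suc k) \<circ> ?C = ?C \<circ> transpose m (Suc k)"
    using C bij_word_perm[of "rev [m..<k]"] assms
    by (intro transpose_comp_bij) (auto simp: shift_cycle_def)
  moreover have "shift_cycle m a = ?A \<circ> transpose k (Suc k) \<circ> ?C"
    using word_perm_rev_upt[of m a] unfolding rev_upt_split[OF assms]
    by (simp add: word_perm_append C comp_assoc)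
  ultimately show ?thesis by (simp add: word_perm_append C comp_assoc)
qed

lemma delete_letter_concat:
  assumes "1 \<le> I" "I \<le> length (concat xss)"
  shows "\<exists>t p. t < length xss \<and> p < length (xss ! t) \<and>
    delete_letter (concat xss) I =
      concat (take t xss) @ (take p (xss ! t) @ drop (Suc p) (xss ! t)) @ concat (drop (Suc t) xss)"
  using assms
proof (induction xss arbitrary: I)
  case Nil
  then show ?case by simp
next
  case (Cons ys yss)
  show ?case
  proof (cases "I \<le> length ys")
    case True
    then show ?thesis using Cons.prems
      by (intro exI[of _ 0] exI[of _ "I - 1"]) (auto simp: delete_letter_def)
  next
    case False
    then have "1 \<le> I - length ys" "I - length ys \<le> length (concat yss)" using Cons.prems by auto
    then obtain t p where "t < length yss" "p < length (yss ! t)"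
      "delete_letter (concat yss) (I - length ys) =
         concat (take t yss) @ (take p (yss ! t) @ drop (Suc p) (yss ! t)) @ concat (drop (Suc t) yss)"
      using Cons.IH by blast
    moreover have "delete_letter (concat (ys # yss)) I = ys @ delete_letter (concat yss) (I - length ys)"
      using False by (simp add: delete_letter_def)
    ultimately show ?thesis by (intro exI[of _ "Suc t"] exI[of _ p]) auto
  qed
qed

lemma delete_letter_row_word_blocks:
  assumes "1 \<le> I" "I \<le> length (row_word n w)"
  obtains m k where "1 \<le> m" "m < n" "m \<le> k" "k < m + code n w m"
    "delete_letter (row_word n w) I = concat (map (row_block n w) [1..<m]) @
       (rev [Suc k..<m + code n w m] @ rev [m..<k]) @ concat (map (row_block n w) [Suc m..<n])"
proof -
  let ?xss = "map (row_block n w) [1..<n]"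
  obtain t p where tp: "t < length ?xss" "p < length (?xss ! t)"
    "delete_letter (concat ?xss) I =
       concat (take t ?xss) @ (take p (?xss ! t) @ drop (Suc p) (?xss ! t)) @ concat (drop (Suc t) ?xss)"
    using delete_letter_concat[of I ?xss] assms unfolding row_word_eq_concat_blocks by blast
  define m where "m = Suc t"
  define k where "k = m + code n w m - 1 - p"
  have block: "?xss ! t = rev [m..<m + code n w m]" using tp(1) by (simp add: m_def row_block_def)
  then have mk: "m \<le> k" "k < m + code n w m" using tp(2) by (auto simp: k_def)
  have "take p (?xss ! t) @ drop (Suc p) (?xss ! t) = rev [Suc k..<m + code n w m] @ rev [m..<k]"
    unfolding block rev_upt_split[OF mk] using tp(2) block by (simp add: k_def)
  moreover have "take t ?xss = map (row_block n w) [1..<m]" "drop (Suc t) ?xss = map (row_block n w) [Suc m..<n]"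
    using tp(1) by (simp_all add: m_def take_map drop_map)
  ultimately show ?thesis
    using that[OF _ _ mk] tp m_def unfolding row_word_eq_concat_blocks by simp
qed

lemma word_perm_delete_row_word:
  assumes w: "w permutes {1..n}" and m: "1 \<le> m" "m < n" and k: "m \<le> k" "k < m + code n w m"
    and q: "tail_std n w m q = Suc k"
  shows "word_perm (concat (map (row_block n w) [1..<m]) @
    (rev [Suc k..<m + code n w m] @ rev [m..<k]) @ concat (map (row_block n w) [Suc m..<n])) =
    w \<circ> transpose m q"
proof -
  let ?P = "word_perm (concat (map (row_block n w) [1..<m]))"
  let ?c = "shift_cycle m (code n w m)" and ?T = "tail_std n w m"
  have inj: "inj_on w {1..n}" using w by (rule permutes_inj_on)
  have T: "word_perm (concat (map (row_block n w) [Suc m..<n])) = ?T"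
    using word_perm_row_blocks_from[OF inj \<open>m < n\<close>] .
  have "[1..<n] = [1..<m] @ m # [Suc m..<n]"
    using m upt_append[of 1 m n] by (simp add: upt_conv_Cons)
  then have w_blocks: "?P \<circ> ?c \<circ> ?T = w"
    using word_perm_row_word[OF w]
    by (simp add: row_word_eq_concat_blocks word_perm_append word_perm_row_block T comp_assoc)
  have "transpose m (Suc k) \<circ> ?T = ?T \<circ> transpose m q"
    by (rule transpose_comp_bij[OF bij_tail_std[OF inj \<open>m < n\<close>] _ q]) (simp add: tail_std_def)
  then have "word_perm (concat (map (row_block n w) [1..<m]) @
      (rev [Suc k..<m + code n w m] @ rev [m..<k]) @ concat (map (row_block n w) [Suc m..<n])) =
      ?P \<circ> ?c \<circ> ?T \<circ> transpose m q"
    using k by (simp only: word_perm_append[of "concat (map (row_block n w) [1..<m])"]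
        word_perm_append[of "rev [Suc k..<m + code n w m] @ rev [m..<k]"]
        word_perm_rev_upt_delete T comp_assoc)
  then show ?thesis unfolding w_blocks .
qed

section \<open>Counting braid moves and commutations\<close>

lemma move_seq_append: "move_seq u fs v \<Longrightarrow> move_seq v gs x \<Longrightarrow> move_seq u (fs @ gs) x"
  by (induction rule: move_seq.induct) (auto intro: move_seq.intros)

lemma move_in_context: "move u f v \<Longrightarrow> move (p @ u @ s) f (p @ v @ s)"
  by (induction rule: move.induct) (metis append.assoc append_Cons move.intros)+

lemma move_seq_in_context: "move_seq u fs v \<Longrightarrow> move_seq (p @ u @ s) fs (p @ v @ s)"
  by (induction rule: move_seq.induct) (auto intro: move_seq.intros move_in_context)

definition moves_to :: "nat list \<Rightarrow> nat \<Rightarrow> nat \<Rightarrow> nat list \<Rightarrow> bool" where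
  "moves_to u b c v \<longleftrightarrow>
     (\<exists>fs. move_seq u fs v \<and> count_list fs Braid = b \<and> count_list fs Comm = c)"

lemma moves_to_refl: "moves_to u 0 0 u"
  unfolding moves_to_def by (auto intro: move_seq.nil)

lemma moves_to_trans: "moves_to u b c v \<Longrightarrow> moves_to v b' c' x \<Longrightarrow> moves_to u (b + b') (c + c') x"
  unfolding moves_to_def by (auto intro!: move_seq_append)

lemma moves_to_in_context: "moves_to u b c v \<Longrightarrow> moves_to (p @ u @ s) b c (p @ v @ s)"
  unfolding moves_to_def by (auto intro!: move_seq_in_context)

lemma moves_to_single:
  assumes "move u f v"
  shows "moves_to u (of_bool (f = Braid)) (of_bool (f = Comm)) v"
proof -
  have "move_seq u [f] v" using assms by (auto intro: move_seq.intros)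
  then show ?thesis unfolding moves_to_def by (cases f) force+
qed

lemma moves_to_commute: "a + 2 \<le> b \<or> b + 2 \<le> a \<Longrightarrow> moves_to [a, b] 0 1 [b, a]"
  using moves_to_single[OF move.commute[of a b "[]" "[]"]] by simp

lemma moves_to_braid: "moves_to [a, Suc a, a] 1 0 [Suc a, a, Suc a]"
  using moves_to_single[OF move.braid1[of "[]" a "[]"]] by simp

lemma moves_to_commute_past:
  assumes "\<forall>r \<in> set rs. y + 2 \<le> r \<or> r + 2 \<le> y"
  shows "moves_to (y # rs) 0 (length rs) (rs @ [y])"
  using assms
proof (induction rs)
  case Nil
  then show ?case by (simp add: moves_to_refl)
next
  case (Cons r rs)
  have "moves_to ([] @ [y, r] @ rs) 0 1 ([] @ [r, y] @ rs)"
    using Cons.prems by (intro moves_to_in_context moves_to_commute) auto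
  moreover have "moves_to ([r] @ (y # rs) @ []) 0 (length rs) ([r] @ (rs @ [y]) @ [])"
    using Cons by (intro moves_to_in_context) auto
  ultimately show ?case using moves_to_trans by fastforce
qed

lemma moves_to_braid_past_block:
  assumes "m \<le> y" "y + 2 \<le> m + a"
  shows "moves_to (y # rev [m..<m + a]) 1 (a - 2) (rev [m..<m + a] @ [Suc y])"
proof -
  let ?R1 = "rev [Suc (Suc y)..<m + a]" and ?R2 = "rev [m..<y]"
  have block: "rev [m..<m + a] = ?R1 @ [Suc y, y] @ ?R2"
    using rev_upt_split[of m "Suc y" a] assms by simp
  have high: "moves_to ([] @ (y # ?R1) @ ([Suc y, y] @ ?R2)) 0 (length ?R1)
      ([] @ (?R1 @ [y]) @ ([Suc y, y] @ ?R2))"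
    by (intro moves_to_in_context moves_to_commute_past) auto
  have braid: "moves_to (?R1 @ [y, Suc y, y] @ ?R2) 1 0 (?R1 @ [Suc y, y, Suc y] @ ?R2)"
    by (intro moves_to_in_context moves_to_braid)
  have low: "moves_to ((?R1 @ [Suc y, y]) @ (Suc y # ?R2) @ []) 0 (length ?R2)
      ((?R1 @ [Suc y, y]) @ (?R2 @ [Suc y]) @ [])"
    by (intro moves_to_in_context moves_to_commute_past) auto
  have "moves_to (y # rev [m..<m + a]) (0 + 1 + 0) (length ?R1 + 0 + length ?R2)
      (rev [m..<m + a] @ [Suc y])"
    using moves_to_trans[OF moves_to_trans[OF high[simplified] braid[simplified]] low[simplified]]
    unfolding block by simp
  moreover have "length ?R1 + 0 + length ?R2 = a - 2" using assms by simp
  ultimately show ?thesis by simp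
qed

text \<open>The letter \<open>s\<^sub>y\<close> standing in front of the block \<open>s\<^bsub>m+a-1\<^esub> \<cdots> s\<^sub>m\<close> can be moved
  behind it as \<open>s\<^bsub>y'\<^esub>\<close>, by commutations (\<open>y' = y\<close>) or with one braid move (\<open>y' = y + 1\<close>).\<close>
definition passes_block :: "nat \<Rightarrow> nat \<Rightarrow> nat \<Rightarrow> nat \<Rightarrow> bool" where
  "passes_block m a y y' \<longleftrightarrow>
     (y' = y \<and> (y + 2 \<le> m \<or> m + a < y)) \<or> (y' = Suc y \<and> m \<le> y \<and> y + 2 \<le> m + a)"

lemma moves_to_past_block:
  assumes "passes_block m a y y'"
  shows "y \<le> y' \<and> 2 * (y' - y) \<le> a \<and>
    moves_to (y # rev [m..<m + a]) (y' - y) (a - 2 * (y' - y)) (rev [m..<m + a] @ [y'])"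
proof (cases "y' = y")
  case True
  then have "moves_to (y # rev [m..<m + a]) 0 (length (rev [m..<m + a])) (rev [m..<m + a] @ [y])"
    using assms by (intro moves_to_commute_past) (auto simp: passes_block_def)
  then show ?thesis using True by simp
next
  case False
  then show ?thesis using assms moves_to_braid_past_block[of m y a] by (auto simp: passes_block_def)
qed

lemma moves_to_past_blocks:
  assumes "lo \<le> hi"
    and passes: "\<And>m. lo \<le> m \<Longrightarrow> m < hi \<Longrightarrow> passes_block m (a m) (g m) (g (Suc m))"
  shows "g lo \<le> g hi \<and> 2 * (g hi - g lo) \<le> (\<Sum>m = lo..<hi. a m) \<and>
    moves_to (g lo # concat (map (\<lambda>m. rev [m..<m + a m]) [lo..<hi]))
      (g hi - g lo) ((\<Sum>m = lo..<hi. a m) - 2 * (g hi - g lo))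
      (concat (map (\<lambda>m. rev [m..<m + a m]) [lo..<hi]) @ [g hi])"
  using assms(1)
proof (induction hi rule: dec_induct)
  case base
  then show ?case by (simp add: moves_to_refl)
next
  case (step k)
  let ?X = "concat (map (\<lambda>m. rev [m..<m + a m]) [lo..<k])" and ?B = "rev [k..<k + a k]"
  let ?b = "g k - g lo" and ?b' = "g (Suc k) - g k"
  have IH: "g lo \<le> g k" "2 * ?b \<le> (\<Sum>m = lo..<k. a m)"
    and "moves_to (g lo # ?X) ?b ((\<Sum>m = lo..<k. a m) - 2 * ?b) (?X @ [g k])"
    using step.IH by auto
  then have IH_moves: "moves_to (g lo # ?X @ ?B) ?b ((\<Sum>m = lo..<k. a m) - 2 * ?b) (?X @ g k # ?B)"
    using moves_to_in_context[of _ _ _ _ "[]" ?B] by fastforce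
  have block: "g k \<le> g (Suc k)" "2 * ?b' \<le> a k"
    and "moves_to (g k # ?B) ?b' (a k - 2 * ?b') (?B @ [g (Suc k)])"
    using moves_to_past_block[OF passes[of k]] step.hyps by auto
  then have block_moves: "moves_to (?X @ g k # ?B) ?b' (a k - 2 * ?b') (?X @ ?B @ [g (Suc k)])"
    using moves_to_in_context[of _ _ _ _ ?X "[]"] by fastforce
  have "moves_to (g lo # ?X @ ?B) (?b + ?b') ((\<Sum>m = lo..<k. a m) - 2 * ?b + (a k - 2 * ?b'))
      (?X @ ?B @ [g (Suc k)])"
    by (rule moves_to_trans[OF IH_moves block_moves])
  moreover have "?b + ?b' = g (Suc k) - g lo"
    "(\<Sum>m = lo..<k. a m) - 2 * ?b + (a k - 2 * ?b') = (\<Sum>m = lo..<Suc k. a m) - 2 * (g (Suc k) - g lo)"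
    using IH(1,2) block(1,2) step.hyps by simp_all
  ultimately show ?case using IH(1,2) block(1,2) step.hyps by simp
qed

lemma moves_to_letters_past:
  assumes "\<And>l. l < c \<Longrightarrow> moves_to ((y + l) # Y) b e (Y @ [y + l + d])"
  shows "moves_to (rev [y..<y + c] @ Y) (c * b) (c * e) (Y @ rev [y + d..<y + c + d])"
  using assms
proof (induction c)
  case 0
  then show ?case by (simp add: moves_to_refl)
next
  case (Suc c)
  let ?D = "rev [y + d..<y + c + d]"
  have "moves_to ((y + c) # rev [y..<y + c] @ Y) (c * b) (c * e) ((y + c) # Y @ ?D)"
    using Suc moves_to_in_context[of _ _ _ _ "[y + c]" "[]"] by fastforce
  moreover have "moves_to ((y + c) # Y @ ?D) b e (Y @ (y + c + d) # ?D)"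
    using Suc.prems[of c] moves_to_in_context[of _ _ _ _ "[]" ?D] by fastforce
  ultimately show ?case
    using moves_to_trans by (fastforce simp: add.commute add.left_commute)
qed

section \<open>Parity invariants\<close>

definition pair_image :: "(nat \<Rightarrow> nat) \<Rightarrow> nat \<times> nat \<Rightarrow> nat \<times> nat" where
  "pair_image f p = (min (f (fst p)) (f (snd p)), max (f (fst p)) (f (snd p)))"

definition pair_set :: "nat \<times> nat \<Rightarrow> nat set" where
  "pair_set p = {fst p, snd p}"

text \<open>The reflection sequence of \<open>s\<^bsub>r\<^sub>1\<^esub> \<cdots> s\<^bsub>r\<^sub>l\<^esub>\<close>: its \<open>k\<close>-th entry is the transposition
  \<open>s\<^bsub>r\<^sub>1\<^esub> \<cdots> s\<^bsub>r\<^sub>k\<^esub> \<cdots> s\<^bsub>r\<^sub>1\<^esub>\<close>, recorded as the increasing pair of points it swaps.\<close>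
fun refl_seq :: "nat list \<Rightarrow> (nat \<times> nat) list" where
  "refl_seq [] = []"
| "refl_seq (r # rs) = (r, Suc r) # map (pair_image (transpose r (Suc r))) (refl_seq rs)"

lemma pair_image_comp: "pair_image f (pair_image g p) = pair_image (f \<circ> g) p"
  by (cases "g (fst p) \<le> g (snd p)") (auto simp: pair_image_def min_def max_def)

lemma pair_set_pair_image: "pair_set (pair_image f p) = f ` pair_set p"
  by (auto simp: pair_set_def pair_image_def min_def max_def)

lemma pair_set_pair_image_Int:
  "inj f \<Longrightarrow> pair_set (pair_image f p) \<inter> pair_set (pair_image f q) = f ` (pair_set p \<inter> pair_set q)"
  by (simp add: pair_set_pair_image image_Int)

lemma pair_image_inj:
  assumes "inj f" "pair_set p \<noteq> pair_set q"
  shows "pair_image f p \<noteq> pair_image f q"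
  using assms by (metis pair_set_pair_image inj_image_eq_iff)

lemma refl_seq_fst_le: "p \<in> set (refl_seq xs) \<Longrightarrow> fst p \<le> snd p"
  by (induction xs arbitrary: p) (auto simp: pair_image_def)

lemma refl_seq_append: "refl_seq (xs @ ys) = refl_seq xs @ map (pair_image (word_perm xs)) (refl_seq ys)"
proof (induction xs)
  case Nil
  have "map (pair_image (\<lambda>x. x)) (refl_seq ys) = refl_seq ys"
    by (rule map_idI) (metis refl_seq_fst_le pair_image_def max_absorb2 min_absorb1 prod.collapse)
  then show ?case by simp
next
  case (Cons r xs)
  then show ?case by (simp add: pair_image_comp comp_def)
qed

lemma refl_seq_commute:
  assumes "a + 2 \<le> b \<or> b + 2 \<le> a"
  obtains x y zs where
    "refl_seq (xs @ [a, b] @ ys) = refl_seq xs @ [x, y] @ zs"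
    "refl_seq (xs @ [b, a] @ ys) = refl_seq xs @ [y, x] @ zs"
    "x \<noteq> y" "pair_set x \<inter> pair_set y = {}"
proof -
  let ?f = "word_perm xs"
  let ?x = "pair_image ?f (a, Suc a)" and ?y = "pair_image ?f (b, Suc b)"
  let ?zs = "map (pair_image (?f \<circ> word_perm [a, b])) (refl_seq ys)"
  have inj: "inj ?f" using bij_word_perm by (rule bij_is_inj)
  have swap: "word_perm [b, a] = word_perm [a, b]"
    using assms by (auto simp: fun_eq_iff transpose_def)
  have seq: "refl_seq [a, b] = [(a, Suc a), (b, Suc b)]" "refl_seq [b, a] = [(b, Suc b), (a, Suc a)]"
    using assms by (auto simp: pair_image_def transpose_def)
  have "refl_seq (xs @ [a, b] @ ys) = refl_seq xs @ [?x, ?y] @ ?zs"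
    "refl_seq (xs @ [b, a] @ ys) = refl_seq xs @ [?y, ?x] @ ?zs"
    unfolding refl_seq_append swap seq by (simp_all add: pair_image_comp)
  moreover have disjoint: "pair_set (a, Suc a) \<inter> pair_set (b, Suc b) = {}"
    using assms by (auto simp: pair_set_def)
  then have "pair_set ?x \<inter> pair_set ?y = {}"
    by (simp add: pair_set_pair_image_Int[OF inj])
  moreover have "pair_set (a, Suc a) \<noteq> pair_set (b, Suc b)"
    using disjoint by (auto simp: pair_set_def)
  then have "?x \<noteq> ?y" by (rule pair_image_inj[OF inj])
  ultimately show ?thesis by (intro that)
qed

lemma refl_seq_braid:
  obtains x y z zs where
    "refl_seq (xs @ [a, Suc a, a] @ ys) = refl_seq xs @ [x, y, z] @ zs"
    "refl_seq (xs @ [Suc a, a, Suc a] @ ys) = refl_seq xs @ [z, y, x] @ zs"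
    "distinct [x, y, z]"
    "pair_set x \<inter> pair_set y \<noteq> {}" "pair_set x \<inter> pair_set z \<noteq> {}" "pair_set y \<inter> pair_set z \<noteq> {}"
proof -
  let ?f = "word_perm xs"
  let ?x = "pair_image ?f (a, Suc a)" and ?y = "pair_image ?f (a, Suc (Suc a))"
    and ?z = "pair_image ?f (Suc a, Suc (Suc a))"
  let ?zs = "map (pair_image (?f \<circ> word_perm [a, Suc a, a])) (refl_seq ys)"
  have inj: "inj ?f" using bij_word_perm by (rule bij_is_inj)
  have braid: "word_perm [Suc a, a, Suc a] = word_perm [a, Suc a, a]"
    by (auto simp: fun_eq_iff transpose_def)
  have seq: "refl_seq [a, Suc a, a] = [(a, Suc a), (a, Suc (Suc a)), (Suc a, Suc (Suc a))]"
    "refl_seq [Suc a, a, Suc a] = [(Suc a, Suc (Suc a)), (a, Suc (Suc a)), (a, Suc a)]"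
    by (auto simp: pair_image_def transpose_def)
  have "refl_seq (xs @ [a, Suc a, a] @ ys) = refl_seq xs @ [?x, ?y, ?z] @ ?zs"
    "refl_seq (xs @ [Suc a, a, Suc a] @ ys) = refl_seq xs @ [?z, ?y, ?x] @ ?zs"
    unfolding refl_seq_append braid seq by (simp_all add: pair_image_comp)
  moreover have "pair_set (a, Suc a) \<noteq> pair_set (a, Suc (Suc a))"
    "pair_set (a, Suc a) \<noteq> pair_set (Suc a, Suc (Suc a))"
    "pair_set (a, Suc (Suc a)) \<noteq> pair_set (Suc a, Suc (Suc a))"
    by (auto simp: pair_set_def doubleton_eq_iff)
  then have "distinct [?x, ?y, ?z]" using pair_image_inj[OF inj] by auto
  moreover have "pair_set ?x \<inter> pair_set ?y \<noteq> {}" "pair_set ?x \<inter> pair_set ?z \<noteq> {}"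
    "pair_set ?y \<inter> pair_set ?z \<noteq> {}"
    unfolding pair_set_pair_image_Int[OF inj] by (auto simp: pair_set_def)
  ultimately show ?thesis by (rule that)
qed

fun count_pairs :: "('a \<Rightarrow> 'a \<Rightarrow> bool) \<Rightarrow> 'a list \<Rightarrow> nat" where
  "count_pairs R [] = 0"
| "count_pairs R (x # xs) = length (filter (R x) xs) + count_pairs R xs"

lemma count_pairs_append:
  "count_pairs R (xs @ ys) = count_pairs R xs + count_pairs R ys + (\<Sum>x\<leftarrow>xs. length (filter (R x) ys))"
  by (induction xs) simp_all

lemma sum_list_length_filter_mset:
  "(\<Sum>x\<leftarrow>xs. length (filter (R x) ys)) = (\<Sum>x\<in>#mset xs. size (filter_mset (R x) (mset ys)))"
  by (induction xs) (simp_all flip: mset_filter)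

lemma even_count_pairs_segment:
  assumes "mset M' = mset M"
  shows "even (count_pairs R (A @ M @ Z) + count_pairs R (A @ M' @ Z)) \<longleftrightarrow>
    even (count_pairs R M + count_pairs R M')"
proof -
  let ?cross = "\<lambda>xs ys. \<Sum>x\<leftarrow>xs. length (filter (R x) ys)"
  have "?cross A (M' @ Z) = ?cross A (M @ Z)" "?cross M' Z = ?cross M Z"
    using assms by (simp_all only: sum_list_length_filter_mset mset_append)
  then have "count_pairs R (A @ M @ Z) + count_pairs R (A @ M' @ Z) =
      2 * (count_pairs R A + count_pairs R Z + ?cross A (M @ Z) + ?cross M Z) + count_pairs R M + count_pairs R M'"
    by (simp add: count_pairs_append)
  then show ?thesis by simp
qed

lemma even_count_pairs_swap:
  "even (count_pairs R (A @ [x, y] @ Z) + count_pairs R (A @ [y, x] @ Z)) \<longleftrightarrow>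
    even (of_bool (R x y) + of_bool (R y x) :: nat)"
  using even_count_pairs_segment[of "[y, x]" "[x, y]" R A Z] by simp

lemma even_count_pairs_reverse3:
  "even (count_pairs R (A @ [x, y, z] @ Z) + count_pairs R (A @ [z, y, x] @ Z)) \<longleftrightarrow>
    even ((of_bool (R x y) + of_bool (R y x)) + (of_bool (R x z) + of_bool (R z x)) +
      (of_bool (R y z) + of_bool (R z y)) :: nat)"
  using even_count_pairs_segment[of "[z, y, x]" "[x, y, z]" R A Z] by (simp add: ac_simps)

definition less_disjoint :: "nat \<times> nat \<Rightarrow> nat \<times> nat \<Rightarrow> bool" where
  "less_disjoint p q \<longleftrightarrow> p < q \<and> pair_set p \<inter> pair_set q = {}"

lemma of_bool_less_swap: "x \<noteq> y \<Longrightarrow> of_bool (x < y) + of_bool (y < x) = (1::nat)"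
  for x y :: "'a::linorder"
  by (cases "x < y") auto

lemma of_bool_less_disjoint_swap:
  "x \<noteq> y \<Longrightarrow>
    of_bool (less_disjoint x y) + of_bool (less_disjoint y x) = (of_bool (pair_set x \<inter> pair_set y = {}) :: nat)"
  by (cases "x < y") (auto simp: less_disjoint_def Int_commute)

lemma swap_parity:
  assumes "x \<noteq> y" "pair_set x \<inter> pair_set y = {}"
  shows "odd (count_pairs (<) (A @ [x, y] @ Z) + count_pairs (<) (A @ [y, x] @ Z))"
    and "odd (count_pairs less_disjoint (A @ [x, y] @ Z) + count_pairs less_disjoint (A @ [y, x] @ Z))"
  unfolding even_count_pairs_swap
  using of_bool_less_swap[OF assms(1)] of_bool_less_disjoint_swap[OF assms(1)] assms(2) by simp_all

lemma reverse3_parity: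
  assumes "distinct [x, y, z]"
    and "pair_set x \<inter> pair_set y \<noteq> {}" "pair_set x \<inter> pair_set z \<noteq> {}" "pair_set y \<inter> pair_set z \<noteq> {}"
  shows "odd (count_pairs (<) (A @ [x, y, z] @ Z) + count_pairs (<) (A @ [z, y, x] @ Z))"
    and "even (count_pairs less_disjoint (A @ [x, y, z] @ Z) + count_pairs less_disjoint (A @ [z, y, x] @ Z))"
proof -
  have "x \<noteq> y" "x \<noteq> z" "y \<noteq> z" using assms(1) by auto
  then show "odd (count_pairs (<) (A @ [x, y, z] @ Z) + count_pairs (<) (A @ [z, y, x] @ Z))"
    unfolding even_count_pairs_reverse3
    using of_bool_less_swap[OF \<open>x \<noteq> y\<close>] of_bool_less_swap[OF \<open>x \<noteq> z\<close>]
      of_bool_less_swap[OF \<open>y \<noteq> z\<close>] by simp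
  show "even (count_pairs less_disjoint (A @ [x, y, z] @ Z) + count_pairs less_disjoint (A @ [z, y, x] @ Z))"
    unfolding even_count_pairs_reverse3
    using of_bool_less_disjoint_swap[OF \<open>x \<noteq> y\<close>] of_bool_less_disjoint_swap[OF \<open>x \<noteq> z\<close>]
      of_bool_less_disjoint_swap[OF \<open>y \<noteq> z\<close>] assms(2-4) by simp
qed

lemma move_parity:
  assumes "move u f v"
  shows "odd (count_pairs (<) (refl_seq u) + count_pairs (<) (refl_seq v)) \<and>
    (odd (count_pairs less_disjoint (refl_seq u) + count_pairs less_disjoint (refl_seq v)) \<longleftrightarrow> f = Comm)"
  using assms
proof cases
  case (commute a b xs ys)
  obtain x y zs where
    "refl_seq u = refl_seq xs @ [x, y] @ zs" "refl_seq v = refl_seq xs @ [y, x] @ zs"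
    "x \<noteq> y" "pair_set x \<inter> pair_set y = {}"
    using refl_seq_commute[OF commute(4), of xs ys] unfolding commute(1,3) by blast
  then show ?thesis using swap_parity[of x y "refl_seq xs" zs] commute(2) by simp
next
  case (braid1 xs a ys)
  obtain x y z zs where
    "refl_seq u = refl_seq xs @ [x, y, z] @ zs" "refl_seq v = refl_seq xs @ [z, y, x] @ zs"
    "distinct [x, y, z]"
    "pair_set x \<inter> pair_set y \<noteq> {}" "pair_set x \<inter> pair_set z \<noteq> {}" "pair_set y \<inter> pair_set z \<noteq> {}"
    using refl_seq_braid[of xs a ys] unfolding braid1(1,3) by blast
  then show ?thesis using reverse3_parity[of x y z "refl_seq xs" zs] braid1(2) by simp
next
  case (braid2 xs a ys)
  obtain x y z zs where
    "refl_seq v = refl_seq xs @ [x, y, z] @ zs" "refl_seq u = refl_seq xs @ [z, y, x] @ zs"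
    "distinct [x, y, z]"
    "pair_set x \<inter> pair_set y \<noteq> {}" "pair_set x \<inter> pair_set z \<noteq> {}" "pair_set y \<inter> pair_set z \<noteq> {}"
    using refl_seq_braid[of xs a ys] unfolding braid2(1,3) by blast
  then show ?thesis using reverse3_parity[of x y z "refl_seq xs" zs] braid2(2) by (simp add: add.commute)
qed

lemma count_list_Braid_add_Comm: "count_list fs Braid + count_list fs Comm = length fs"
proof (induction fs)
  case (Cons f fs)
  then show ?case by (cases f) auto
qed simp

lemma move_seq_parity:
  assumes "move_seq u fs v"
  shows "even (count_pairs (<) (refl_seq u) + count_pairs (<) (refl_seq v) + length fs) \<and>
    even (count_pairs less_disjoint (refl_seq u) + count_pairs less_disjoint (refl_seq v) + count_list fs Comm)"
  using assms
proof (induction rule: move_seq.induct)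
  case (cons u f v fs x)
  then show ?case using move_parity[OF cons.hyps(1)] by (cases f) (auto simp: even_add)
qed simp

lemma move_seq_parities_unique:
  assumes "move_seq u fs v" "move_seq u gs v"
  shows "even (count_list gs Braid) = even (count_list fs Braid) \<and>
    even (count_list gs Comm) = even (count_list fs Comm)"
proof -
  have "even (length gs) = even (length fs)" "even (count_list gs Comm) = even (count_list fs Comm)"
    using move_seq_parity[OF assms(1)] move_seq_parity[OF assms(2)] by (auto simp: even_add)
  then show ?thesis using count_list_Braid_add_Comm[of fs] count_list_Braid_add_Comm[of gs]
    by (metis even_add)
qed

section \<open>Row-reading words along a Bruhat cover\<close>

locale bruhat_cover =
  fixes n :: nat and w w' :: "nat \<Rightarrow> nat" and i j :: nat
  assumes covers: "covers_by n w w' i j"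
begin

lemma w'_permutes: "w' permutes {1..n}"
  and i_ge_1: "1 \<le> i" and i_less_j: "i < j" and j_le_n: "j \<le> n"
  and w_eq: "w = w' \<circ> transpose i j"
  and w'_i_less_j: "w' i < w' j"
  using covers by (simp_all add: covers_by_def)

lemma w_permutes: "w permutes {1..n}"
  unfolding w_eq using i_ge_1 i_less_j j_le_n
  by (intro permutes_compose[OF permutes_swap_id w'_permutes]) auto

lemma w_i: "w i = w' j" and w_j: "w j = w' i" and w_other: "q \<noteq> i \<Longrightarrow> q \<noteq> j \<Longrightarrow> w q = w' q"
  by (simp_all add: w_eq)

lemma inj_w': "inj w'"
  using w'_permutes by (rule permutes_inj)

lemma between_values:
  assumes "i < m" "m < j"
  shows "w' m < w' i \<or> w' j < w' m"
proof -
  have "w' m \<noteq> w' i" "w' m \<noteq> w' j" using assms inj_w' by (auto dest: injD)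
  moreover have "\<not> (w' i < w' m \<and> w' m < w' j)"
    using covers assms unfolding covers_by_def by blast
  ultimately show ?thesis by linarith
qed

definition gap :: nat where
  "gap = card {q. j < q \<and> q \<le> n \<and> w' i < w' q \<and> w' q < w' j}"

lemma code_other:
  assumes "m \<noteq> i" "m \<noteq> j"
  shows "code n w m = code n w' m"
proof (cases "m < i")
  case True
  have range: "m < transpose i j k \<longleftrightarrow> m < k" "transpose i j k \<le> n \<longleftrightarrow> k \<le> n" for k
    using True i_less_j j_le_n by (auto simp: transpose_def)
  have "{k. m < k \<and> k \<le> n \<and> w k < w m} = transpose i j ` {k. m < k \<and> k \<le> n \<and> w' k < w' m}"
    unfolding set_eq_iff in_transpose_image_iff mem_Collect_eq range w_eq comp_apply
    using assms by simp
  then show ?thesis unfolding code_def by (simp add: card_image)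
next
  case False
  have "w k < w m \<longleftrightarrow> w' k < w' m" if "m < k" for k
  proof (cases "k = j")
    case True
    then show ?thesis using between_values[of m] False assms w'_i_less_j that by (auto simp: w_j w_other)
  next
    case False
    then show ?thesis using \<open>\<not> m < i\<close> assms that by (simp add: w_other)
  qed
  then have "{k. m < k \<and> k \<le> n \<and> w k < w m} = {k. m < k \<and> k \<le> n \<and> w' k < w' m}"
    by blast
  then show ?thesis by (simp add: code_def)
qed

lemma code_i: "code n w i = code n w' i + 1 + gap"
proof -
  let ?A = "{q. i < q \<and> q \<le> n \<and> w' q < w' i}"
  let ?G = "{q. j < q \<and> q \<le> n \<and> w' i < w' q \<and> w' q < w' j}"
  have "w q < w i \<longleftrightarrow> q = j \<or> w' q < w' i \<or> (j < q \<and> w' i < w' q \<and> w' q < w' j)"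
    if "i < q" for q
  proof (cases "q = j")
    case True
    then show ?thesis using w'_i_less_j by (simp add: w_i w_j)
  next
    case False
    have "w' q \<noteq> w' i" using that inj_w' by (auto dest: injD)
    moreover have "\<not> (w' i < w' q \<and> w' q < w' j)" if "q < j"
      using between_values[OF \<open>i < q\<close> that] by linarith
    ultimately show ?thesis using False that w'_i_less_j by (auto simp: w_i w_other nat_neq_iff)
  qed
  then have "{q. i < q \<and> q \<le> n \<and> w q < w i} = insert j (?A \<union> ?G)"
    using i_less_j j_le_n by auto
  moreover have "j \<notin> ?A \<union> ?G" "?A \<inter> ?G = {}" using w'_i_less_j by auto
  ultimately show ?thesis by (simp add: code_def gap_def card_Un_disjoint)
qed

lemma code_j: "code n w' j = code n w j + gap"
proof -
  let ?A = "{q. j < q \<and> q \<le> n \<and> w' q < w' i}"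
  let ?G = "{q. j < q \<and> q \<le> n \<and> w' i < w' q \<and> w' q < w' j}"
  have "w' q < w' j \<longleftrightarrow> w' q < w' i \<or> (w' i < w' q \<and> w' q < w' j)" if "j < q" for q
  proof -
    have "w' q \<noteq> w' i" using that i_less_j inj_w' by (simp add: inj_eq)
    then show ?thesis using w'_i_less_j by linarith
  qed
  then have "{q. j < q \<and> q \<le> n \<and> w' q < w' j} = ?A \<union> ?G"
    unfolding set_eq_iff Un_iff mem_Collect_eq by meson
  moreover have "{q. j < q \<and> q \<le> n \<and> w q < w j} = ?A"
    using i_less_j by (auto simp: w_j w_other)
  moreover have "?A \<inter> ?G = {}" by auto
  ultimately show ?thesis by (simp add: code_def gap_def card_Un_disjoint)
qed

lemma tail_std_i_j: "tail_std n w i j = Suc (i + code n w' i)"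
proof -
  have "w q < w j \<longleftrightarrow> w' q < w' i" if "i < q" for q
    using that w'_i_less_j by (cases "q = j") (auto simp: w_j w_other)
  then have "{q. i < q \<and> q \<le> n \<and> w q < w j} = {q. i < q \<and> q \<le> n \<and> w' q < w' i}"
    by blast
  then show ?thesis using i_less_j j_le_n by (simp add: tail_std_def code_def)
qed

definition lower_from :: "nat \<Rightarrow> nat" where
  "lower_from m = card {q. m \<le> q \<and> q \<le> n \<and> w' q < w' i}"

lemma lower_from_Suc_i: "lower_from (Suc i) = code n w' i"
  by (simp add: lower_from_def code_def Suc_le_eq)

lemma lower_from_j: "lower_from j = code n w j"
proof -
  have "{q. j \<le> q \<and> q \<le> n \<and> w' q < w' i} = {q. j < q \<and> q \<le> n \<and> w q < w j}"
    using i_less_j w'_i_less_j by (auto simp: w_j w_other le_less)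
  then show ?thesis by (simp add: lower_from_def code_def)
qed

lemma lower_from_Suc:
  assumes "m \<le> n"
  shows "lower_from m = lower_from (Suc m) + of_bool (w' m < w' i)"
proof -
  let ?A = "{q. Suc m \<le> q \<and> q \<le> n \<and> w' q < w' i}"
  have "{q. m \<le> q \<and> q \<le> n \<and> w' q < w' i} = (if w' m < w' i then insert m ?A else ?A)"
    using assms by (auto simp: le_less Suc_le_eq)
  then show ?thesis by (simp add: lower_from_def)
qed

lemma code_le_lower_from:
  assumes "w' m < w' i"
  shows "code n w' m \<le> lower_from (Suc m)"
  unfolding code_def lower_from_def using assms by (intro card_mono) auto

lemma lower_from_gap_le_code:
  assumes "i < m" "m < j" "w' j < w' m"
  shows "lower_from (Suc m) + 1 + gap \<le> code n w' m"
proof -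
  let ?A = "{q. Suc m \<le> q \<and> q \<le> n \<and> w' q < w' i}"
  let ?G = "{q. j < q \<and> q \<le> n \<and> w' i < w' q \<and> w' q < w' j}"
  have "insert j (?A \<union> ?G) \<subseteq> {k. m < k \<and> k \<le> n \<and> w' k < w' m}"
    using assms j_le_n w'_i_less_j by auto
  then have "card (insert j (?A \<union> ?G)) \<le> code n w' m"
    unfolding code_def by (intro card_mono) auto
  moreover have "j \<notin> ?A \<union> ?G" "?A \<inter> ?G = {}" using w'_i_less_j by auto
  ultimately show ?thesis by (simp add: lower_from_def gap_def card_Un_disjoint)
qed

lemma letter_passes_blocks:
  assumes "l < gap"
  shows "Suc (i + code n w' i) \<le> j + code n w j \<and>
    2 * (j + code n w j - Suc (i + code n w' i)) \<le> (\<Sum>m = i..<j. code n w' m) \<and>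
    moves_to ((Suc (i + code n w' i) + l) # concat (map (row_block n w') [i..<j]))
      (j + code n w j - Suc (i + code n w' i))
      ((\<Sum>m = i..<j. code n w' m) - 2 * (j + code n w j - Suc (i + code n w' i)))
      (concat (map (row_block n w') [i..<j]) @ [j + code n w j + l])"
proof -
  \<comment> \<open>the letter reaches block \<open>m > i\<close> as \<open>s\<^bsub>m + lower_from m + l\<^esub>\<close>\<close>
  define g where "g m = (if m = i then Suc (i + code n w' i) else m + lower_from m) + l" for m
  have "passes_block m (code n w' m) (g m) (g (Suc m))" if m: "i \<le> m" "m < j" for m
  proof -
    have "m \<le> n" using m j_le_n by simp
    consider "m = i" | "i < m" "w' m < w' i" | "i < m" "w' j < w' m"
      using between_values[of m] m by (cases "m = i") auto
    then show ?thesis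
    proof cases
      case 1
      then show ?thesis using lower_from_Suc_i by (simp add: g_def passes_block_def)
    next
      case 2
      then show ?thesis
        using lower_from_Suc[OF \<open>m \<le> n\<close>] code_le_lower_from[of m]
        by (simp add: g_def passes_block_def)
    next
      case 3
      then show ?thesis
        using lower_from_Suc[OF \<open>m \<le> n\<close>] lower_from_gap_le_code[of m] \<open>m < j\<close> w'_i_less_j assms
        by (simp add: g_def passes_block_def)
    qed
  qed
  from moves_to_past_blocks[of i j "code n w'" g, OF less_imp_le[OF i_less_j] this]
  show ?thesis
    using i_less_j lower_from_j by (simp add: g_def row_block_def [abs_def])
qed

lemma delete_letter_row_word_in_block_i:
  assumes I: "1 \<le> I" "I \<le> length (row_word n w)"
    and deleted: "word_perm (delete_letter (row_word n w) I) = w'"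
  shows "delete_letter (row_word n w) I = concat (map (row_block n w) [1..<i]) @
    (rev [Suc (i + code n w' i)..<i + code n w i] @ rev [i..<i + code n w' i]) @
    concat (map (row_block n w) [Suc i..<n])"
proof -
  obtain m k where m: "1 \<le> m" "m < n" and k: "m \<le> k" "k < m + code n w m"
    and del: "delete_letter (row_word n w) I = concat (map (row_block n w) [1..<m]) @
       (rev [Suc k..<m + code n w m] @ rev [m..<k]) @ concat (map (row_block n w) [Suc m..<n])"
    using delete_letter_row_word_blocks[OF I] .
  have inj: "inj_on w {1..n}" using w_permutes by (rule permutes_inj_on)
  obtain q where q: "tail_std n w m q = Suc k"
    using bij_tail_std[OF inj \<open>m < n\<close>] by (metis bij_pointE)
  have "m < q"
  proof (rule ccontr)
    assume "\<not> m < q"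
    then have "tail_std n w m q = q" by (simp add: tail_std_def)
    then show False using q k \<open>\<not> m < q\<close> by simp
  qed
  have "w \<circ> transpose m q = w \<circ> transpose i j"
    using word_perm_delete_row_word[OF w_permutes m k q] del deleted by (simp add: w_eq comp_assoc)
  then have "transpose m q = transpose i j"
    using permutes_inj[OF w_permutes] by (simp add: fun_eq_iff inj_eq)
  then have "m = i" "q = j" using transpose_eq_transpose_imp \<open>m < q\<close> i_less_j by blast+
  moreover have "k = i + code n w' i" using q tail_std_i_j \<open>m = i\<close> \<open>q = j\<close> by simp
  ultimately show ?thesis using del by simp
qed

lemma row_block_other: "m \<noteq> i \<Longrightarrow> m \<noteq> j \<Longrightarrow> row_block n w m = row_block n w' m"
  by (simp add: row_block_def code_other)

lemma row_blocks_from_j: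
  "concat (map (row_block n w') [j..<n]) =
    rev [j + code n w j..<j + code n w j + gap] @ concat (map (row_block n w) [j..<n])"
proof (cases "j < n")
  case True
  have "[j..<j + code n w' j] = [j..<j + code n w j] @ [j + code n w j..<j + code n w j + gap]"
    unfolding code_j by (simp add: upt_append add.assoc)
  then have "row_block n w' j = rev [j + code n w j..<j + code n w j + gap] @ row_block n w j"
    by (simp add: row_block_def)
  moreover have "concat (map (row_block n w') [Suc j..<n]) = concat (map (row_block n w) [Suc j..<n])"
    using row_block_other i_less_j by (intro arg_cong[where f = concat] map_cong) auto
  ultimately show ?thesis using True by (simp add: upt_conv_Cons)
next
  case False
  then have "j = n" using j_le_n by simp
  moreover have "code n w' n = 0" by (simp add: code_def)
  ultimately show ?thesis using code_j by simp
qed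

lemma delete_letter_row_word_split:
  assumes I: "1 \<le> I" "I \<le> length (row_word n w)"
    and deleted: "word_perm (delete_letter (row_word n w) I) = w'"
  shows "delete_letter (row_word n w) I = concat (map (row_block n w) [1..<i]) @
    rev [Suc (i + code n w' i)..<Suc (i + code n w' i) + gap] @
    concat (map (row_block n w') [i..<j]) @ concat (map (row_block n w) [j..<n])"
proof -
  have "[Suc i..<n] = [Suc i..<j] @ [j..<n]"
    using i_less_j j_le_n by (simp add: upt_append)
  moreover have "concat (map (row_block n w) [Suc i..<j]) = concat (map (row_block n w') [Suc i..<j])"
    using row_block_other by (intro arg_cong[where f = concat] map_cong) auto
  ultimately have "concat (map (row_block n w) [Suc i..<n]) =
      concat (map (row_block n w') [Suc i..<j]) @ concat (map (row_block n w) [j..<n])"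
    by simp
  moreover have "concat (map (row_block n w') [i..<j]) =
      rev [i..<i + code n w' i] @ concat (map (row_block n w') [Suc i..<j])"
    using i_less_j by (simp add: upt_conv_Cons row_block_def)
  moreover have "i + code n w i = Suc (i + code n w' i) + gap"
    using code_i by simp
  ultimately show ?thesis
    unfolding delete_letter_row_word_in_block_i[OF I deleted] by (simp add: add.assoc)
qed

lemma row_word_w'_split:
  "row_word n w' = concat (map (row_block n w) [1..<i]) @ concat (map (row_block n w') [i..<j]) @
    rev [j + code n w j..<j + code n w j + gap] @ concat (map (row_block n w) [j..<n])"
proof -
  have "[1..<n] = [1..<i] @ [i..<j] @ [j..<n]"
    using i_ge_1 i_less_j j_le_n by (simp add: upt_append)
  moreover have "concat (map (row_block n w') [1..<i]) = concat (map (row_block n w) [1..<i])"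
    using row_block_other i_less_j by (intro arg_cong[where f = concat] map_cong) auto
  ultimately show ?thesis
    unfolding row_word_eq_concat_blocks by (simp add: row_blocks_from_j)
qed

lemma moves_to_row_word:
  assumes I: "1 \<le> I" "I \<le> length (row_word n w)"
    and deleted: "word_perm (delete_letter (row_word n w) I) = w'"
  shows "\<exists>fs. move_seq (delete_letter (row_word n w) I) fs (row_word n w') \<and>
    int (count_list fs Braid) = (int (code n w i) - int (code n w' i) - 1) *
      (int j - int i - 1 + int (code n w j) - int (code n w' i)) \<and>
    int (count_list fs Comm) = (int (code n w i) - int (code n w' i) - 1) *
      ((\<Sum>k = i..<j. int (code n w' k)) - 2 * (int j - int i - 1 + int (code n w j) - int (code n w' i)))"
proof (cases "gap = 0")
  case True
  then show ?thesis
    using delete_letter_row_word_split[OF I deleted] row_word_w'_split code_i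
    by (intro exI[of _ "[]"]) (auto intro: move_seq.nil)
next
  case False
  define y where "y = Suc (i + code n w' i)"
  define b where "b = j + code n w j - y"
  define S where "S = (\<Sum>m = i..<j. code n w' m)"
  let ?P = "concat (map (row_block n w) [1..<i])" and ?Y = "concat (map (row_block n w') [i..<j])"
    and ?T = "concat (map (row_block n w) [j..<n])"
  have y: "y \<le> j + code n w j" and twice_b: "2 * b \<le> S"
    using False letter_passes_blocks[of 0] by (simp_all add: y_def b_def S_def)
  have "moves_to ((y + l) # ?Y) b (S - 2 * b) (?Y @ [y + l + b])" if "l < gap" for l
  proof -
    have "y + l + b = j + code n w j + l" using y by (simp add: b_def)
    then show ?thesis using letter_passes_blocks[OF that] by (simp add: y_def b_def S_def)
  qed
  then have "moves_to (rev [y..<y + gap] @ ?Y) (gap * b) (gap * (S - 2 * b))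
      (?Y @ rev [y + b..<y + gap + b])"
    by (rule moves_to_letters_past)
  moreover have "y + b = j + code n w j" "y + gap + b = j + code n w j + gap"
    using y by (simp_all add: b_def)
  ultimately have "moves_to (rev [y..<y + gap] @ ?Y) (gap * b) (gap * (S - 2 * b))
      (?Y @ rev [j + code n w j..<j + code n w j + gap])"
    by simp
  from moves_to_in_context[OF this, of ?P ?T]
  have "moves_to (delete_letter (row_word n w) I) (gap * b) (gap * (S - 2 * b)) (row_word n w')"
    unfolding delete_letter_row_word_split[OF I deleted] row_word_w'_split y_def by simp
  moreover have "int b = int j - int i - 1 + int (code n w j) - int (code n w' i)"
    using y by (simp add: b_def y_def)
  moreover have "int (S - 2 * b) = (\<Sum>k = i..<j. int (code n w' k)) - 2 * int b"
    using twice_b by (simp add: S_def of_nat_diff)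
  moreover have "int gap = int (code n w i) - int (code n w' i) - 1"
    using code_i by simp
  ultimately show ?thesis unfolding moves_to_def by auto
qed

end

theorem proposition4p3:
  fixes n i j I :: nat and w w' :: "nat \<Rightarrow> nat"
  assumes cov: "covers_by n w w' i j"
    and I: "1 \<le> I" "I \<le> length (row_word n w)"
    and red: "reduced_word_of n (delete_letter (row_word n w) I) w'"
  shows "\<exists>fs. move_seq (delete_letter (row_word n w) I) fs (row_word n w')
     \<and> int (count_list fs Braid) =
         (int (code n w i) - int (code n w' i) - 1) *
         (int j - int i - 1 + int (code n w j) - int (code n w' i))
     \<and> int (count_list fs Comm) =
         (int (code n w i) - int (code n w' i) - 1) *
         ((\<Sum>k = i..<j. int (code n w' k))
           - 2 * (int j - int i - 1 + int (code n w j) - int (code n w' i)))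
     \<and> (\<forall>gs. move_seq (delete_letter (row_word n w) I) gs (row_word n w') \<longrightarrow>
          even (count_list gs Braid) = even (count_list fs Braid) \<and>
          even (count_list gs Comm) = even (count_list fs Comm))"
proof -
  interpret bruhat_cover n w w' i j
    using cov by (rule bruhat_cover.intro)
  have "word_perm (delete_letter (row_word n w) I) = w'"
    using red by (simp add: reduced_word_of_def)
  with moves_to_row_word[OF I] show ?thesis
    using move_seq_parities_unique by blast
qed

end
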